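(* Assume the index sets are ordered ($\mathcal I_1=\{1,\dots,l\}$, $\mathcal I_0=\{l+1,\dots,n\}$). Let $\phi:\mathcal X^l\times\mathcal Y^n\to\mathcal X^n$ be any decoder and $\varepsilon\equiv\Pr(\phi(A\mathbf X,\mathbf Y)\neq\mathbf X)>0$. Then $$\sum_{i=l+1}^nH(C_i\mid C_1^{i-1},\mathbf Y)\le\varepsilon\Big[n+\log\frac1\varepsilon+\log e\Big],$$ where $e$ is the base of the natural logarithm and all logarithms (including in entropies) are to base $|\mathcal X|$.
   Context: $\mathcal X,\mathcal Y$ finite, $|\mathcal X|\ge2$; $(\mathbf X,\mathbf Y)$ random on $\mathcal X^n\times\mathcal Y^n$; $A:\mathcal X^n\to\mathcal X^l$; $B:\mathcal X^n\to\mathcal X^{n-l}$ such that $T(x)\equiv(Ax,Bx)\in\mathcal X^n$ (first the entries of $Ax$, then those of $Bx$) defines a bijection $T:\mathcal X^n\to\mathcal X^n$. $\mathbf C=(C_1,\dots,C_n)=T(\mathbf X)$ and $C_1^{i-1}=(C_1,\dots,C_{i-1})$. *)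

theory Defs
  imports "HOL-Probability.Probability"
begin

definition cond_entropy :: "real \<Rightarrow> 'a pmf \<Rightarrow> ('a \<Rightarrow> 'b) \<Rightarrow> ('a \<Rightarrow> 'c) \<Rightarrow> real" where
  "cond_entropy b M F G =
     (\<Sum>uv\<in>set_pmf (map_pmf (\<lambda>\<omega>. (F \<omega>, G \<omega>)) M).
        - pmf (map_pmf (\<lambda>\<omega>. (F \<omega>, G \<omega>)) M) uv
          * log b (pmf (map_pmf (\<lambda>\<omega>. (F \<omega>, G \<omega>)) M) uv / pmf (map_pmf G M) (snd uv)))"

end

theory Submission
  imports Defs
begin

text \<open>By the chain rule the conditional entropies of the coordinates \<open>C\<^sub>i\<close>, \<open>i > l\<close>, add up
  to \<open>H(C | C\<^sub>1\<^sup>l, Y)\<close>. As \<open>T\<close> is a bijection and \<open>C\<^sub>1\<^sup>l = AX\<close>, this is \<open>H(X | AX, Y)\<close>,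
  which Fano's argument bounds: writing it as \<open>\<Sum> p(w) log (Pr[AX = Ax, Y = y] / p(w))\<close>
  and splitting the outcomes \<open>w = (x, y)\<close> according to whether \<open>\<phi>\<close> decodes correctly, the
  concavity of \<open>log\<close> bounds the erroneous part by \<open>\<epsilon> log (|\<X>|\<^sup>n / \<epsilon>)\<close> (each fibre of
  \<open>(AX, Y)\<close> has at most \<open>|\<X>|\<^sup>n\<close> points) and the correct part, on which \<open>(AX, Y)\<close>
  determines \<open>X\<close>, by \<open>(1 - \<epsilon>) log (1 / (1 - \<epsilon>)) \<le> \<epsilon> log e\<close>.\<close>

lemma ln_weighted_sum_le:
  fixes w a :: "'i \<Rightarrow> real"
  assumes "finite S" and "\<And>i. i \<in> S \<Longrightarrow> w i > 0" and "\<And>i. i \<in> S \<Longrightarrow> a i > 0"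
    and "(\<Sum>i\<in>S. w i * a i) \<le> K" and "K > 0"
  shows "(\<Sum>i\<in>S. w i * ln (a i)) \<le> (\<Sum>i\<in>S. w i) * ln (K / (\<Sum>i\<in>S. w i))"
proof (cases "S = {}")
  case True then show ?thesis by simp
next
  case False
  define W where "W = (\<Sum>i\<in>S. w i)"
  have W: "W > 0" unfolding W_def using assms False by (intro sum_pos) auto
  have tangent: "w i * ln (a i) \<le> w i * (a i * W / K - 1 + ln (K / W))" if "i \<in> S" for i
  proof -
    have ai: "a i > 0" using assms(3)[OF that] .
    have pos: "a i * W / K > 0" using ai assms W by auto
    have "ln (a i * W / K) \<le> a i * W / K - 1" using ln_le_minus_one pos by blast
    moreover have "ln (a i * W / K) = ln (a i) - ln (K / W)"
      using pos ai assms W by (simp add: ln_div ln_mult)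
    ultimately have "ln (a i) \<le> a i * W / K - 1 + ln (K / W)" by linarith
    then show ?thesis using assms(2)[OF that] by (intro mult_left_mono) auto
  qed
  have "(\<Sum>i\<in>S. w i * ln (a i)) \<le> (\<Sum>i\<in>S. w i * (a i * W / K - 1 + ln (K / W)))"
    using tangent by (intro sum_mono) auto
  also have "\<dots> = (W / K) * (\<Sum>i\<in>S. w i * a i) - W + W * ln (K / W)"
    by (simp add: algebra_simps sum.distrib sum_subtractf sum_distrib_left sum_distrib_right
        W_def sum_divide_distrib)
  also have "\<dots> \<le> (W / K) * K - W + W * ln (K / W)"
    using assms W by (intro add_mono diff_mono mult_left_mono) auto
  also have "\<dots> = W * ln (K / W)" using assms by simp
  finally show ?thesis unfolding W_def .
qed

lemma mult_ln_inverse_le: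
  fixes x :: real
  assumes "0 \<le> x"
  shows "x * ln (1 / x) \<le> 1 - x"
proof (cases "x = 0")
  case False
  with assms have "ln (1 / x) \<le> 1 / x - 1" by (intro ln_le_minus_one) auto
  with assms have "x * ln (1 / x) \<le> x * (1 / x - 1)" by (intro mult_left_mono) auto
  with False show ?thesis by (simp add: algebra_simps)
qed simp

lemma sum_telescope_down:
  fixes f :: "nat \<Rightarrow> 'a::ab_group_add"
  shows "l \<le> n \<Longrightarrow> (\<Sum>i\<in>{l+1..n}. f (i - 1) - f i) = f l - f n"
proof (induction n)
  case (Suc n)
  then show ?case
    by (cases "l = Suc n") (auto simp: atLeastAtMostSuc_conv)
qed simp

lemma take_Suc_eq_iff:
  assumes "i < length xs" and "i < length ys"
  shows "take (Suc i) xs = take (Suc i) ys \<longleftrightarrow> xs ! i = ys ! i \<and> take i xs = take i ys"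
proof
  assume eq: "take (Suc i) xs = take (Suc i) ys"
  have "xs ! i = ys ! i" using arg_cong[OF eq, of "\<lambda>zs. zs ! i"] by simp
  moreover have "take i xs = take i ys" using arg_cong[OF eq, of "take i"] by simp
  ultimately show "xs ! i = ys ! i \<and> take i xs = take i ys" ..
qed (use assms in \<open>simp add: take_Suc_conv_app_nth\<close>)

lemma card_fibre_lists_le:
  fixes S :: "('x::finite list \<times> 'y) set"
  assumes "S \<subseteq> {x. length x = n} \<times> {y}"
  shows "card S \<le> CARD('x) ^ n"
proof -
  have "card S \<le> card ({x::'x list. length x = n} \<times> {y})"
    using assms by (intro card_mono finite_cartesian_product) (auto simp: finite_list_length)
  also have "\<dots> = CARD('x) ^ n"
    using card_lists_length_eq[of "UNIV :: 'x set" n] by (simp add: card_cartesian_product)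
  finally show ?thesis .
qed

section \<open>Fibres of a finitely supported pmf\<close>

lemma sum_set_pmf_map_pmf:
  assumes "finite (set_pmf P)"
  shows "(\<Sum>u\<in>set_pmf (map_pmf h P). pmf (map_pmf h P) u * f u)
       = (\<Sum>w\<in>set_pmf P. pmf P w * f (h w))"
proof -
  have "(\<Sum>u\<in>set_pmf (map_pmf h P). pmf (map_pmf h P) u * f u)
      = (\<integral>u. f u \<partial>measure_pmf (map_pmf h P))"
    using assms by (subst integral_measure_pmf_real[where A="set_pmf (map_pmf h P)"])
      (auto simp: mult.commute)
  also have "\<dots> = (\<integral>w. f (h w) \<partial>measure_pmf P)" by simp
  also have "\<dots> = (\<Sum>w\<in>set_pmf P. pmf P w * f (h w))"
    using assms by (subst integral_measure_pmf_real[where A="set_pmf P"]) (auto simp: mult.commute)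
  finally show ?thesis .
qed

lemma prob_fibre_pos:
  assumes "w \<in> set_pmf P"
  shows "measure_pmf.prob P {w'. f w' = f w} > 0"
proof -
  have "pmf P w \<le> measure_pmf.prob P {w'. f w' = f w}"
    using measure_pmf.finite_measure_mono[of "{w}" "{w'. f w' = f w}"]
    by (simp add: measure_pmf_single)
  with pmf_positive[OF assms] show ?thesis by linarith
qed

lemma prob_fibre_cong:
  assumes "\<And>w'. w' \<in> set_pmf P \<Longrightarrow> f w' = f w \<longleftrightarrow> g w' = g w"
  shows "measure_pmf.prob P {w'. f w' = f w} = measure_pmf.prob P {w'. g w' = g w}"
proof -
  have "{w'. f w' = f w} \<inter> set_pmf P = {w'. g w' = g w} \<inter> set_pmf P" using assms by auto
  then show ?thesis by (metis measure_Int_set_pmf)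
qed

lemma sum_prob_fibres_le_1:
  assumes "inj_on g A" and "finite A"
  shows "(\<Sum>w\<in>A. measure_pmf.prob P {w'. g w' = g w}) \<le> 1"
proof -
  have "(\<Sum>w\<in>A. measure_pmf.prob P {w'. g w' = g w}) = (\<Sum>v\<in>g ` A. pmf (map_pmf g P) v)"
    using assms by (simp add: sum.reindex pmf_map vimage_def)
  also have "\<dots> = measure_pmf.prob (map_pmf g P) (g ` A)"
    using assms by (intro measure_measure_pmf_finite[symmetric] finite_imageI)
  also have "\<dots> \<le> 1" by (rule measure_pmf.prob_le_1)
  finally show ?thesis .
qed

lemma sum_prob_fibres_le_card:
  assumes "finite (set_pmf P)"
    and "\<And>w. w \<in> set_pmf P \<Longrightarrow> card {w' \<in> set_pmf P. g w' = g w} \<le> N"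
  shows "(\<Sum>w\<in>set_pmf P. measure_pmf.prob P {w'. g w' = g w}) \<le> N"
proof -
  let ?S = "set_pmf P"
  have fibre_sum: "measure_pmf.prob P {w'. g w' = g w} = (\<Sum>w'\<in>?S. if g w' = g w then pmf P w' else 0)"
    for w
  proof -
    have "{w'. g w' = g w} \<inter> ?S = {w' \<in> ?S. g w' = g w}" by blast
    then have "measure_pmf.prob P {w'. g w' = g w} = measure_pmf.prob P {w' \<in> ?S. g w' = g w}"
      by (metis measure_Int_set_pmf)
    also have "\<dots> = (\<Sum>w'\<in>?S. if g w' = g w then pmf P w' else 0)"
      using assms(1) by (simp add: measure_measure_pmf_finite sum.inter_filter)
    finally show ?thesis .
  qed
  have "(\<Sum>w\<in>?S. measure_pmf.prob P {w'. g w' = g w})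
      = (\<Sum>w'\<in>?S. pmf P w' * card {w \<in> ?S. g w' = g w})"
    unfolding fibre_sum using assms(1)
    by (subst sum.swap) (simp add: sum.inter_filter[symmetric] mult.commute)
  also have "\<dots> \<le> (\<Sum>w'\<in>?S. pmf P w' * N)"
  proof (intro sum_mono mult_left_mono)
    fix w' assume "w' \<in> ?S"
    moreover have "{w \<in> ?S. g w' = g w} = {w \<in> ?S. g w = g w'}" by auto
    ultimately show "real (card {w \<in> ?S. g w' = g w}) \<le> real N" using assms(2) by simp
  qed simp
  also have "\<dots> = N"
    using assms(1) by (simp add: sum_distrib_right[symmetric] sum_pmf_eq_1)
  finally show ?thesis .
qed

section \<open>Conditional entropy\<close>

lemma cond_entropy_eq_sum_set_pmf:
  assumes "finite (set_pmf P)"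
  shows "cond_entropy b P F G = (\<Sum>w\<in>set_pmf P. - pmf P w *
     log b (measure_pmf.prob P {w'. (F w', G w') = (F w, G w)}
            / measure_pmf.prob P {w'. G w' = G w}))"
  unfolding cond_entropy_def
  using sum_set_pmf_map_pmf[OF assms, of "\<lambda>w. (F w, G w)"
      "\<lambda>uv. - log b (pmf (map_pmf (\<lambda>w. (F w, G w)) P) uv / pmf (map_pmf G P) (snd uv))"]
  by (simp add: pmf_map vimage_def)

lemma cond_entropy_cong:
  assumes "finite (set_pmf P)"
    and "\<And>w w'. w \<in> set_pmf P \<Longrightarrow> w' \<in> set_pmf P \<Longrightarrow>
           (F w', G w') = (F w, G w) \<longleftrightarrow> (F' w', G' w') = (F' w, G' w)"
    and "\<And>w w'. w \<in> set_pmf P \<Longrightarrow> w' \<in> set_pmf P \<Longrightarrow> G w' = G w \<longleftrightarrow> G' w' = G' w"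
  shows "cond_entropy b P F G = cond_entropy b P F' G'"
  unfolding cond_entropy_eq_sum_set_pmf[OF assms(1)]
proof (intro sum.cong refl)
  fix w assume w: "w \<in> set_pmf P"
  have "measure_pmf.prob P {w'. (F w', G w') = (F w, G w)}
      = measure_pmf.prob P {w'. (F' w', G' w') = (F' w, G' w)}"
    using assms(2)[OF w] by (rule prob_fibre_cong)
  moreover have "measure_pmf.prob P {w'. G w' = G w} = measure_pmf.prob P {w'. G' w' = G' w}"
    using assms(3)[OF w] by (rule prob_fibre_cong)
  ultimately show "- pmf P w * log b (measure_pmf.prob P {w'. (F w', G w') = (F w, G w)}
        / measure_pmf.prob P {w'. G w' = G w})
      = - pmf P w * log b (measure_pmf.prob P {w'. (F' w', G' w') = (F' w, G' w)}
        / measure_pmf.prob P {w'. G' w' = G' w})"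
    by (simp only:)
qed

lemma cond_entropy_inj_on:
  assumes "finite (set_pmf P)" and "inj_on F (set_pmf P)"
    and "\<And>w. w \<in> set_pmf P \<Longrightarrow> G w = G' w"
  shows "cond_entropy b P F G = cond_entropy b P (\<lambda>w. w) G'"
  using assms by (intro cond_entropy_cong) (auto dest: inj_onD)

lemma cond_entropy_of_refinement:
  assumes "finite (set_pmf P)"
    and "\<And>w w'. w \<in> set_pmf P \<Longrightarrow> w' \<in> set_pmf P \<Longrightarrow> F w' = F w \<Longrightarrow> G w' = G w"
  shows "cond_entropy b P F G = (\<Sum>w\<in>set_pmf P. pmf P w *
     (log b (measure_pmf.prob P {w'. G w' = G w}) - log b (measure_pmf.prob P {w'. F w' = F w})))"
  unfolding cond_entropy_eq_sum_set_pmf[OF assms(1)]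
proof (intro sum.cong refl)
  fix w assume w: "w \<in> set_pmf P"
  have "measure_pmf.prob P {w'. (F w', G w') = (F w, G w)} = measure_pmf.prob P {w'. F w' = F w}"
    using assms(2)[OF w] by (intro prob_fibre_cong) auto
  then show "- pmf P w * log b (measure_pmf.prob P {w'. (F w', G w') = (F w, G w)}
        / measure_pmf.prob P {w'. G w' = G w})
      = pmf P w * (log b (measure_pmf.prob P {w'. G w' = G w})
                   - log b (measure_pmf.prob P {w'. F w' = F w}))"
    using prob_fibre_pos[OF w, of F] prob_fibre_pos[OF w, of G] by (simp add: log_divide algebra_simps)
qed

lemma cond_entropy_chain_rule:
  assumes fin: "finite (set_pmf P)" and len: "\<And>w. w \<in> set_pmf P \<Longrightarrow> length (C w) = n"
    and "l \<le> n"
  shows "(\<Sum>i\<in>{l+1..n}. cond_entropy b P (\<lambda>w. C w ! (i - 1)) (\<lambda>w. (take (i - 1) (C w), Y w)))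
       = cond_entropy b P (\<lambda>w. (C w, Y w)) (\<lambda>w. (take l (C w), Y w))"
proof -
  define L where "L k w = log b (measure_pmf.prob P {w'. (take k (C w'), Y w') = (take k (C w), Y w)})"
    for k w
  have refines: "take k xs = take k ys" if "k \<le> j" "take j xs = take j ys" for j k and xs ys :: "'b list"
    using that by (metis min.absorb1 take_take)
  have step: "cond_entropy b P (\<lambda>w. C w ! (i - 1)) (\<lambda>w. (take (i - 1) (C w), Y w))
      = (\<Sum>w\<in>set_pmf P. pmf P w * (L (i - 1) w - L i w))" if i: "i \<in> {l+1..n}" for i
  proof -
    have "cond_entropy b P (\<lambda>w. C w ! (i - 1)) (\<lambda>w. (take (i - 1) (C w), Y w))
        = cond_entropy b P (\<lambda>w. (take i (C w), Y w)) (\<lambda>w. (take (i - 1) (C w), Y w))"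
    proof (rule cond_entropy_cong[OF fin])
      fix w w' assume "w \<in> set_pmf P" "w' \<in> set_pmf P"
      then have "i - 1 < length (C w)" "i - 1 < length (C w')" using len i by auto
      moreover obtain j where "i = Suc j" using i by (cases i) auto
      ultimately show "(C w' ! (i - 1), take (i - 1) (C w'), Y w') = (C w ! (i - 1), take (i - 1) (C w), Y w)
          \<longleftrightarrow> ((take i (C w'), Y w'), take (i - 1) (C w'), Y w')
              = ((take i (C w), Y w), take (i - 1) (C w), Y w)"
        by (auto simp: take_Suc_eq_iff)
    qed simp
    also have "\<dots> = (\<Sum>w\<in>set_pmf P. pmf P w * (L (i - 1) w - L i w))"
      unfolding L_def by (rule cond_entropy_of_refinement[OF fin]) (auto intro: refines[of "i - Suc 0" i])
    finally show ?thesis .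
  qed
  have "(\<Sum>i\<in>{l+1..n}. cond_entropy b P (\<lambda>w. C w ! (i - 1)) (\<lambda>w. (take (i - 1) (C w), Y w)))
      = (\<Sum>i\<in>{l+1..n}. \<Sum>w\<in>set_pmf P. pmf P w * (L (i - 1) w - L i w))"
    using step by (rule sum.cong[OF refl])
  also have "\<dots> = (\<Sum>w\<in>set_pmf P. pmf P w * (\<Sum>i\<in>{l+1..n}. L (i - 1) w - L i w))"
    by (subst sum.swap) (simp only: sum_distrib_left)
  also have "\<dots> = (\<Sum>w\<in>set_pmf P. pmf P w * (L l w - L n w))"
    by (rule sum.cong[OF refl]) (simp only: sum_telescope_down[OF \<open>l \<le> n\<close>, of "\<lambda>i. L i _"])
  also have "\<dots> = cond_entropy b P (\<lambda>w. (take n (C w), Y w)) (\<lambda>w. (take l (C w), Y w))"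
    unfolding L_def using \<open>l \<le> n\<close>
    by (subst cond_entropy_of_refinement[OF fin]) (auto intro: refines[of l n])
  also have "\<dots> = cond_entropy b P (\<lambda>w. (C w, Y w)) (\<lambda>w. (take l (C w), Y w))"
    by (rule cond_entropy_cong[OF fin]) (simp_all add: len)
  finally show ?thesis .
qed

lemma fano_inequality:
  fixes P :: "'a pmf" and g :: "'a \<Rightarrow> 'b" and \<psi> :: "'b \<Rightarrow> 'a"
  defines "\<epsilon> \<equiv> measure_pmf.prob P {w. \<psi> (g w) \<noteq> w}"
  assumes fin: "finite (set_pmf P)" and "b > 1"
    and fibre: "\<And>w. w \<in> set_pmf P \<Longrightarrow> card {w' \<in> set_pmf P. g w' = g w} \<le> N"
    and "\<epsilon> > 0"
  shows "cond_entropy b P (\<lambda>w. w) g \<le> \<epsilon> * (log b N + log b (1 / \<epsilon>) + log b (exp 1))"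
proof -
  define S where "S = set_pmf P"
  define E where "E = {w. \<psi> (g w) \<noteq> w}"
  define pg where "pg w = measure_pmf.prob P {w'. g w' = g w}" for w
  define D where "D A = (\<Sum>w\<in>A. pmf P w * ln (pg w / pmf P w))" for A
  have p_pos: "pmf P w > 0" if "w \<in> S" for w
    using that unfolding S_def by (rule pmf_positive)
  have pg_pos: "pg w > 0" if "w \<in> S" for w
    using that unfolding S_def pg_def by (rule prob_fibre_pos)
  have "N > 0"
  proof -
    obtain w where w: "w \<in> S" using set_pmf_not_empty[of P] unfolding S_def by blast
    then have "card {w' \<in> S. g w' = g w} > 0" using fin unfolding S_def by (auto simp: card_gt_0_iff)
    with fibre[of w] w show ?thesis unfolding S_def by linarith
  qed
  have entropy: "cond_entropy b P (\<lambda>w. w) g = D S / ln b"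
  proof -
    have "cond_entropy b P (\<lambda>w. w) g = (\<Sum>w\<in>S. pmf P w * (log b (pg w) - log b (pmf P w)))"
      unfolding S_def pg_def by (subst cond_entropy_of_refinement[OF fin]) (auto simp: measure_pmf_single)
    also have "\<dots> = (\<Sum>w\<in>S. pmf P w * ln (pg w / pmf P w) / ln b)"
    proof (intro sum.cong refl)
      fix w assume "w \<in> S"
      with p_pos[of w] pg_pos[of w]
      show "pmf P w * (log b (pg w) - log b (pmf P w)) = pmf P w * ln (pg w / pmf P w) / ln b"
        by (simp add: log_def ln_div diff_divide_distrib[symmetric])
    qed
    finally show ?thesis unfolding D_def by (simp add: sum_divide_distrib)
  qed
  have eps: "\<epsilon> = (\<Sum>w\<in>S \<inter> E. pmf P w)"
    using fin unfolding \<epsilon>_def S_def E_def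
    by (metis Int_commute measure_Int_set_pmf measure_measure_pmf_finite finite_Int)
  have eps_compl: "(\<Sum>w\<in>S - E. pmf P w) = 1 - \<epsilon>"
    using sum.Int_Diff[OF fin, of "pmf P" E] sum_pmf_eq_1[OF fin] eps unfolding S_def by simp
  have cancel: "pmf P w * (pg w / pmf P w) = pg w" if "w \<in> S" for w
    using p_pos[OF that] by simp
  have error_part: "D (S \<inter> E) \<le> \<epsilon> * ln (N / \<epsilon>)"
  proof -
    have "(\<Sum>w\<in>S \<inter> E. pmf P w * (pg w / pmf P w)) = (\<Sum>w\<in>S \<inter> E. pg w)"
      by (rule sum.cong[OF refl], rule cancel) auto
    also have "\<dots> \<le> (\<Sum>w\<in>S. pg w)"
      using fin pg_pos unfolding S_def by (intro sum_mono2) (auto intro: less_imp_le)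
    also have "\<dots> \<le> N"
      unfolding S_def pg_def using fin fibre by (rule sum_prob_fibres_le_card)
    finally have "D (S \<inter> E) \<le> (\<Sum>w\<in>S \<inter> E. pmf P w) * ln (N / (\<Sum>w\<in>S \<inter> E. pmf P w))"
      unfolding D_def using fin p_pos pg_pos \<open>N > 0\<close> unfolding S_def
      by (intro ln_weighted_sum_le) auto
    then show ?thesis using eps by simp
  qed
  have correct_part: "D (S - E) \<le> \<epsilon>"
  proof -
    have "inj_on g (S - E)"
      unfolding E_def by (rule inj_onI) (metis (mono_tags, lifting) DiffD2 mem_Collect_eq)
    then have "(\<Sum>w\<in>S - E. pg w) \<le> 1"
      using fin unfolding pg_def S_def by (intro sum_prob_fibres_le_1) auto
    moreover have "(\<Sum>w\<in>S - E. pmf P w * (pg w / pmf P w)) = (\<Sum>w\<in>S - E. pg w)"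
      by (rule sum.cong[OF refl], rule cancel) auto
    ultimately have "(\<Sum>w\<in>S - E. pmf P w * (pg w / pmf P w)) \<le> 1" by simp
    then have "D (S - E) \<le> (\<Sum>w\<in>S - E. pmf P w) * ln (1 / (\<Sum>w\<in>S - E. pmf P w))"
      unfolding D_def using fin p_pos pg_pos unfolding S_def by (intro ln_weighted_sum_le) auto
    also have "\<dots> \<le> \<epsilon>"
      using mult_ln_inverse_le[of "1 - \<epsilon>"] eps_compl measure_pmf.prob_le_1
      unfolding \<epsilon>_def by simp
    finally show ?thesis .
  qed
  have "D S = D (S \<inter> E) + D (S - E)"
    unfolding D_def using fin unfolding S_def by (rule sum.Int_Diff)
  also have "\<dots> \<le> \<epsilon> * (ln N + ln (1 / \<epsilon>) + 1)"
    using error_part correct_part \<open>N > 0\<close> \<open>\<epsilon> > 0\<close> by (simp add: ln_div algebra_simps)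
  finally show ?thesis
    using entropy \<open>b > 1\<close> by (simp add: log_def divide_simps)
qed

theorem mainTheorem9:
  fixes P :: "('x::finite list \<times> 'y::finite list) pmf"
    and A :: "'x list \<Rightarrow> 'x list"
    and B :: "'x list \<Rightarrow> 'x list"
    and \<phi> :: "'x list \<Rightarrow> 'y list \<Rightarrow> 'x list"
    and n l :: nat
  assumes card_X: "CARD('x) \<ge> 2"
    and supp: "set_pmf P \<subseteq> {(x, y). length x = n \<and> length y = n}"
    and l_le: "l \<le> n"
    and A_len: "\<And>x. length x = n \<Longrightarrow> length (A x) = l"
    and B_len: "\<And>x. length x = n \<Longrightarrow> length (B x) = n - l"
    and T_bij: "bij_betw (\<lambda>x. A x @ B x) {x. length x = n} {x. length x = n}"
    and eps_pos: "measure_pmf.prob P {(x, y). \<phi> (A x) y \<noteq> x} > 0"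
  shows "(\<Sum>i\<in>{l+1..n}.
           cond_entropy (real CARD('x)) P
             (\<lambda>(x, y). (A x @ B x) ! (i - 1))
             (\<lambda>(x, y). (take (i - 1) (A x @ B x), y)))
         \<le> measure_pmf.prob P {(x, y). \<phi> (A x) y \<noteq> x}
           * (real n
              + log (real CARD('x)) (1 / measure_pmf.prob P {(x, y). \<phi> (A x) y \<noteq> x})
              + log (real CARD('x)) (exp 1))"
proof -
  define q where "q = real CARD('x)"
  define C where "C w = A (fst w) @ B (fst w)" for w :: "'x list \<times> 'y list"
  define g where "g = (\<lambda>(x, y :: 'y list). (A x, y))"
  define \<psi> where "\<psi> = (\<lambda>(a, y :: 'y list). (\<phi> a y, y))"
  have error_event: "{w. \<psi> (g w) \<noteq> w} = {(x, y). \<phi> (A x) y \<noteq> x}"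
    unfolding g_def \<psi>_def by auto
  have fin: "finite (set_pmf P)"
    by (rule finite_subset[OF supp]) (simp add: finite_list_length)
  have len_C: "length (C w) = n" if "w \<in> set_pmf P" for w
    using that supp A_len B_len l_le unfolding C_def by auto
  have inj: "inj_on (\<lambda>w. (C w, snd w)) (set_pmf P)"
  proof (rule inj_onI)
    fix w w' assume w: "w \<in> set_pmf P" "w' \<in> set_pmf P" and eq: "(C w, snd w) = (C w', snd w')"
    have "fst w = fst w'"
      using bij_betw_imp_inj_on[OF T_bij] by (rule inj_onD) (use eq w supp in \<open>auto simp: C_def\<close>)
    with eq show "w = w'" by (simp add: prod_eq_iff)
  qed
  have "(\<Sum>i\<in>{l+1..n}. cond_entropy q P (\<lambda>(x, y). (A x @ B x) ! (i - 1))
           (\<lambda>(x, y). (take (i - 1) (A x @ B x), y)))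
      = (\<Sum>i\<in>{l+1..n}. cond_entropy q P (\<lambda>w. C w ! (i - 1)) (\<lambda>w. (take (i - 1) (C w), snd w)))"
    unfolding C_def by (simp add: split_def)
  also have "\<dots> = cond_entropy q P (\<lambda>w. (C w, snd w)) (\<lambda>w. (take l (C w), snd w))"
    using fin len_C l_le by (rule cond_entropy_chain_rule)
  also have "\<dots> = cond_entropy q P (\<lambda>w. w) g"
    using fin inj by (rule cond_entropy_inj_on) (use supp A_len in \<open>auto simp: C_def g_def\<close>)
  also have "\<dots> \<le> measure_pmf.prob P {w. \<psi> (g w) \<noteq> w}
      * (log q (CARD('x) ^ n) + log q (1 / measure_pmf.prob P {w. \<psi> (g w) \<noteq> w})
         + log q (exp 1))"
  proof (rule fano_inequality[OF fin])
    fix w assume "w \<in> set_pmf P"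
    then show "card {w' \<in> set_pmf P. g w' = g w} \<le> CARD('x) ^ n"
      using supp unfolding g_def by (intro card_fibre_lists_le[where y = "snd w"]) auto
  qed (use card_X eps_pos in \<open>auto simp: q_def error_event\<close>)
  also note error_event
  also have "log q (CARD('x) ^ n) = n"
    using card_X unfolding q_def by (simp add: log_nat_power)
  finally show ?thesis unfolding q_def .
qed

end
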